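(* Let $n \ge 1$, $1 \le q \le n$, $S \subseteq B_n$, $r \in [0:n-1]$ and $b \in \{0,1\}$ such that $1 \le |S(r,b)| \le |S(r,1-b)|$. Then $$m_q(S) \le m_q(S(r,1-b)) + m_q(S(r,b)) + m_{q-1}(S(r,b)).$$
   Context: $B_n = \{0,1\}^n$ with coordinates $x = (x_{n-1},\ldots,x_0)$. For $S \subseteq B_n$, $r \in [0:n-1]$, $c \in \{0,1\}$: $S(r,c) = \{x \in S : x_r = c\}$. A $q$-dimensional subcube of $B_n$ is a set $\{x \in B_n : x_i = b(i) \text{ for all } i \in Q\}$ with $Q \subseteq [0:n-1]$, $|Q| = n-q$, $b: Q \to \{0,1\}$. $m_q(T)$ denotes the number of $q$-dimensional subcubes of $B_n$ contained in $T \subseteq B_n$ (for $q = 0$ this is $|T|$). *)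

theory Defs
  imports Main
begin

definition cube :: "nat \<Rightarrow> bool list set" where
  "cube n = {x. length x = n}"

definition slice :: "bool list set \<Rightarrow> nat \<Rightarrow> bool \<Rightarrow> bool list set" where
  "slice S r c = {x \<in> S. x ! r = c}"

definition subcube :: "nat \<Rightarrow> nat set \<Rightarrow> (nat \<Rightarrow> bool) \<Rightarrow> bool list set" where
  "subcube n Q b = {x \<in> cube n. \<forall>i\<in>Q. x ! i = b i}"

definition is_subcube :: "nat \<Rightarrow> nat \<Rightarrow> bool list set \<Rightarrow> bool" where
  "is_subcube n q C \<longleftrightarrow> (\<exists>Q b. Q \<subseteq> {..<n} \<and> card Q = n - q \<and> C = subcube n Q b)"

definition m :: "nat \<Rightarrow> nat \<Rightarrow> bool list set \<Rightarrow> nat" where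
  "m n q T = card {C. is_subcube n q C \<and> C \<subseteq> T}"

end

theory Submission
  imports Defs
begin

text \<open>Split the q-subcubes of S into those inside S(r,\<not>b), those inside S(r,b), and those
  on which the coordinate r is free. Restricting a cube of the last kind to x_r = b gives a
  (q-1)-subcube of S(r,b), and the cube is recovered from it by letting x_r vary again; so the
  restriction is injective and there are at most m_{q-1}(S(r,b)) such cubes.\<close>

definition subcubes :: "nat \<Rightarrow> nat \<Rightarrow> bool list set \<Rightarrow> bool list set set" where
  "subcubes n q T = {C. is_subcube n q C \<and> C \<subseteq> T}"

lemma m_eq_card_subcubes: "m n q T = card (subcubes n q T)"
  by (simp add: m_def subcubes_def)

lemma finite_cube: "finite (cube n)"
  unfolding cube_def using finite_lists_length_eq[of "UNIV :: bool set" n] by simp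

lemma finite_subcubes: "finite (subcubes n q T)"
proof -
  have "subcubes n q T \<subseteq> Pow (cube n)"
    by (auto simp: subcubes_def is_subcube_def subcube_def)
  thus ?thesis using finite_cube by (meson finite_Pow_iff finite_subset)
qed

lemma slice_mono: "C \<subseteq> S \<Longrightarrow> slice C r b \<subseteq> slice S r b"
  by (auto simp: slice_def)

lemma subcube_subset_slice:
  assumes "r \<in> Q" "subcube n Q c \<subseteq> S"
  shows "subcube n Q c \<subseteq> slice S r (c r)"
  using assms by (auto simp: slice_def subcube_def)

lemma is_subcube_slice_subcube:
  assumes "r \<notin> Q" "r < n" "Q \<subseteq> {..<n}" "card Q = n - q" "1 \<le> q" "q \<le> n"
  shows "is_subcube n (q - 1) (slice (subcube n Q c) r b)"
proof -
  have "finite Q" using assms(3) finite_subset by blast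
  hence "card (insert r Q) = n - (q - 1)"
    using assms(1,4,5,6) by simp
  moreover have "slice (subcube n Q c) r b = subcube n (insert r Q) (c(r := b))"
    using assms(1) by (auto simp: slice_def subcube_def)
  ultimately show ?thesis
    using assms(2,3) unfolding is_subcube_def by blast
qed

lemma subcube_eq_lift_slice:
  assumes "r \<notin> Q" "r < n"
  shows "subcube n Q c = {x \<in> cube n. x[r := b] \<in> slice (subcube n Q c) r b}"
proof -
  have "x[r := b] ! i = x ! i" if "i \<in> Q" for x :: "bool list" and i
    using assms(1) that by (metis nth_list_update_neq)
  thus ?thesis
    using assms(2) by (auto simp: subcube_def cube_def slice_def)
qed

lemma crossing_subcube_free_at:
  assumes "is_subcube n q C" "C \<subseteq> S" "\<forall>c. \<not> C \<subseteq> slice S r c"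
  obtains Q c where "r \<notin> Q" "Q \<subseteq> {..<n}" "card Q = n - q" "C = subcube n Q c"
proof -
  obtain Q c where Q: "Q \<subseteq> {..<n}" "card Q = n - q" "C = subcube n Q c"
    using assms(1) unfolding is_subcube_def by blast
  have "r \<notin> Q"
  proof
    assume "r \<in> Q"
    hence "C \<subseteq> slice S r (c r)"
      using subcube_subset_slice assms(2) Q(3) by blast
    thus False using assms(3) by blast
  qed
  thus ?thesis using Q that by blast
qed

lemma card_subcubes_crossing_le:
  assumes "r < n" "1 \<le> q" "q \<le> n"
  shows "card {C \<in> subcubes n q S. \<forall>c. \<not> C \<subseteq> slice S r c} \<le> m n (q - 1) (slice S r b)"
    (is "card ?X \<le> _")
proof -
  have lift: "C = {x \<in> cube n. x[r := b] \<in> slice C r b}" if "C \<in> ?X" for C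
  proof -
    have "is_subcube n q C" "C \<subseteq> S" "\<forall>c. \<not> C \<subseteq> slice S r c"
      using that by (simp_all add: subcubes_def)
    then obtain Q c where Q: "r \<notin> Q" "Q \<subseteq> {..<n}" "card Q = n - q" "C = subcube n Q c"
      by (rule crossing_subcube_free_at)
    show ?thesis
      unfolding Q(4) by (rule subcube_eq_lift_slice[OF Q(1) assms(1)])
  qed
  have "inj_on (\<lambda>C. slice C r b) ?X"
  proof (rule inj_onI)
    fix C D assume C: "C \<in> ?X" and D: "D \<in> ?X" and eq: "slice C r b = slice D r b"
    have "C = {x \<in> cube n. x[r := b] \<in> slice C r b}" using C by (rule lift)
    also have "\<dots> = {x \<in> cube n. x[r := b] \<in> slice D r b}" by (simp only: eq)
    also have "\<dots> = D" using D by (rule lift[symmetric])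
    finally show "C = D" .
  qed
  moreover have "(\<lambda>C. slice C r b) ` ?X \<subseteq> subcubes n (q - 1) (slice S r b)"
  proof (rule image_subsetI)
    fix C assume C: "C \<in> ?X"
    hence "is_subcube n q C" "C \<subseteq> S" "\<forall>c. \<not> C \<subseteq> slice S r c"
      by (simp_all add: subcubes_def)
    then obtain Q c where "r \<notin> Q" "Q \<subseteq> {..<n}" "card Q = n - q" "C = subcube n Q c"
      by (rule crossing_subcube_free_at)
    hence "is_subcube n (q - 1) (slice C r b)"
      using is_subcube_slice_subcube assms by blast
    moreover have "slice C r b \<subseteq> slice S r b"
      using C by (simp add: subcubes_def slice_mono)
    ultimately show "slice C r b \<in> subcubes n (q - 1) (slice S r b)"
      by (simp add: subcubes_def)
  qed
  ultimately show ?thesis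
    unfolding m_eq_card_subcubes by (intro card_inj_on_le finite_subcubes)
qed

theorem mainTheorem3:
  fixes n q r :: nat and S :: "bool list set" and b :: bool
  assumes "n \<ge> 1" and "1 \<le> q" and "q \<le> n"
    and "S \<subseteq> cube n" and "r < n"
    and "1 \<le> card (slice S r b)"
    and "card (slice S r b) \<le> card (slice S r (\<not> b))"
  shows "m n q S \<le> m n q (slice S r (\<not> b)) + m n q (slice S r b) + m n (q - 1) (slice S r b)"
proof -
  let ?A1 = "subcubes n q (slice S r (\<not> b))" and ?A2 = "subcubes n q (slice S r b)"
  let ?X = "{C \<in> subcubes n q S. \<forall>c. \<not> C \<subseteq> slice S r c}"
  have "subcubes n q S \<subseteq> ?A1 \<union> ?A2 \<union> ?X"
  proof
    fix C assume C: "C \<in> subcubes n q S"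
    show "C \<in> ?A1 \<union> ?A2 \<union> ?X"
    proof (cases "\<exists>c. C \<subseteq> slice S r c")
      case True
      then obtain c where "C \<subseteq> slice S r c" by blast
      with C show ?thesis by (cases "c = b") (auto simp: subcubes_def)
    qed (use C in blast)
  qed
  hence "m n q S \<le> card (?A1 \<union> ?A2 \<union> ?X)"
    unfolding m_eq_card_subcubes by (intro card_mono) (simp_all add: finite_subcubes)
  also have "\<dots> \<le> card ?A1 + card ?A2 + card ?X"
    by (meson add_right_mono card_Un_le order_trans)
  also have "card ?X \<le> m n (q - 1) (slice S r b)"
    using assms(5,2,3) by (rule card_subcubes_crossing_le)
  finally show ?thesis by (simp add: m_eq_card_subcubes)
qed

end
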